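(* The axiom $p\mathrel{\Box\!\!\!\rightarrow} p$ is $\kappa_\emptyset$-persistent: if a conditional Esakia space validates $p\mathrel{\Box\!\!\!\rightarrow} p$ then so does its empty fill-in.
   Context: A conditional Esakia space is an Esakia space $(X,\leq,\tau)$ with relations $\mathcal{R}=\{R_a\mid a\text{ a clopen upset}\}$ such that $\{x\mid R_a[x]\subseteq b\}$ is clopen for clopen upsets $a,b$, $(\leq\circ R_a\circ\leq)=R_a$, and each $R_a[x]$ is closed; validity uses clopen valuations. A conditional frame is $(X,\leq,\mathcal{R})$ with relations $R_a$ for every upset $a$ satisfying $(\leq\circ R_a)\subseteq(R_a\circ\leq)$; validity uses valuations into upsets, with $x\models\phi\mathrel{\Box\!\!\!\rightarrow}\psi$ iff every $R_{V(\phi)}$-successor of $x$ satisfies $\psi$. The empty fill-in $\kappa_\emptyset$ of a conditional Esakia space is the conditional frame $(X,\leq,\mathcal{R}')$ where $R'_a=R_a$ for clopen upsets $a$ and $R'_a=\emptyset$ for non-clopen upsets $a$. *)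

theory Defs
  imports "HOL-Analysis.Analysis"
begin

definition upset :: "'a set \<Rightarrow> 'a rel \<Rightarrow> 'a set \<Rightarrow> bool" where
  "upset X le a \<longleftrightarrow> a \<subseteq> X \<and> (\<forall>x\<in>a. \<forall>y. (x, y) \<in> le \<longrightarrow> y \<in> a)"

definition downset :: "'a rel \<Rightarrow> 'a set \<Rightarrow> 'a set" where
  "downset le U = {x. \<exists>y\<in>U. (x, y) \<in> le}"

definition clopenin :: "'a topology \<Rightarrow> 'a set \<Rightarrow> bool" where
  "clopenin T U \<longleftrightarrow> openin T U \<and> closedin T U"

definition clopen_upset :: "'a topology \<Rightarrow> 'a rel \<Rightarrow> 'a set \<Rightarrow> bool" where
  "clopen_upset T le a \<longleftrightarrow> clopenin T a \<and> upset (topspace T) le a"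

definition esakia_space :: "'a topology \<Rightarrow> 'a rel \<Rightarrow> bool" where
  "esakia_space T le \<longleftrightarrow>
     compact_space T \<and> partial_order_on (topspace T) le \<and>
     (\<forall>x\<in>topspace T. \<forall>y\<in>topspace T. (x, y) \<notin> le \<longrightarrow>
        (\<exists>U. clopen_upset T le U \<and> x \<in> U \<and> y \<notin> U)) \<and>
     (\<forall>U. clopenin T U \<longrightarrow> clopenin T (downset le U))"

text \<open>Conditional Esakia space: relations R a indexed by clopen upsets a
  (the values of R at other sets are irrelevant).\<close>
definition cond_esakia_space :: "'a topology \<Rightarrow> 'a rel \<Rightarrow> ('a set \<Rightarrow> 'a rel) \<Rightarrow> bool" where
  "cond_esakia_space T le R \<longleftrightarrow> esakia_space T le \<and>
     (\<forall>a. clopen_upset T le a \<longrightarrow>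
        R a \<subseteq> topspace T \<times> topspace T \<and>
        (\<forall>b. clopen_upset T le b \<longrightarrow> clopenin T {x \<in> topspace T. R a `` {x} \<subseteq> b}) \<and>
        le O R a O le = R a \<and>
        (\<forall>x\<in>topspace T. closedin T (R a `` {x})))"

definition cond_frame :: "'a set \<Rightarrow> 'a rel \<Rightarrow> ('a set \<Rightarrow> 'a rel) \<Rightarrow> bool" where
  "cond_frame X le R \<longleftrightarrow> partial_order_on X le \<and>
     (\<forall>a. upset X le a \<longrightarrow> R a \<subseteq> X \<times> X \<and> le O R a \<subseteq> R a O le)"

datatype form = Var nat | Bot | Conj form form | Disj form form | Impl form form
  | Cond form form

fun sem :: "'a set \<Rightarrow> 'a rel \<Rightarrow> ('a set \<Rightarrow> 'a rel) \<Rightarrow> (nat \<Rightarrow> 'a set) \<Rightarrow> form \<Rightarrow> 'a set" where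
  "sem X le R V (Var p) = V p"
| "sem X le R V Bot = {}"
| "sem X le R V (Conj \<phi> \<psi>) = sem X le R V \<phi> \<inter> sem X le R V \<psi>"
| "sem X le R V (Disj \<phi> \<psi>) = sem X le R V \<phi> \<union> sem X le R V \<psi>"
| "sem X le R V (Impl \<phi> \<psi>) =
     {x \<in> X. \<forall>y. (x, y) \<in> le \<longrightarrow> y \<in> sem X le R V \<phi> \<longrightarrow> y \<in> sem X le R V \<psi>}"
| "sem X le R V (Cond \<phi> \<psi>) =
     {x \<in> X. \<forall>y. (x, y) \<in> R (sem X le R V \<phi>) \<longrightarrow> y \<in> sem X le R V \<psi>}"

definition valid_esakia :: "'a topology \<Rightarrow> 'a rel \<Rightarrow> ('a set \<Rightarrow> 'a rel) \<Rightarrow> form \<Rightarrow> bool" where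
  "valid_esakia T le R \<phi> \<longleftrightarrow>
     (\<forall>V. (\<forall>p. clopen_upset T le (V p)) \<longrightarrow> sem (topspace T) le R V \<phi> = topspace T)"

definition valid_frame :: "'a set \<Rightarrow> 'a rel \<Rightarrow> ('a set \<Rightarrow> 'a rel) \<Rightarrow> form \<Rightarrow> bool" where
  "valid_frame X le R \<phi> \<longleftrightarrow>
     (\<forall>V. (\<forall>p. upset X le (V p)) \<longrightarrow> sem X le R V \<phi> = X)"

definition empty_fill_in :: "'a topology \<Rightarrow> 'a rel \<Rightarrow> ('a set \<Rightarrow> 'a rel) \<Rightarrow> ('a set \<Rightarrow> 'a rel)" where
  "empty_fill_in T le R a = (if clopen_upset T le a then R a else {})"

end

theory Submission
  imports Defs
begin

text \<open>The axiom p \<box>\<rightarrow> p says exactly that R a x \<subseteq> a for every admissible value a of p.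
  In the empty fill-in the relations at clopen upsets are unchanged, and at all other
  upsets they are empty, so the condition holds trivially there.\<close>

lemma sem_Cond_Var_self:
  "sem X le R V (Cond (Var p) (Var p)) = {x \<in> X. R (V p) `` {x} \<subseteq> V p}"
  by auto

lemma valid_esakia_Cond_Var_self_iff:
  "valid_esakia T le R (Cond (Var p) (Var p)) \<longleftrightarrow>
     (\<forall>a. clopen_upset T le a \<longrightarrow> (\<forall>x\<in>topspace T. R a `` {x} \<subseteq> a))"
proof
  assume valid: "valid_esakia T le R (Cond (Var p) (Var p))"
  show "\<forall>a. clopen_upset T le a \<longrightarrow> (\<forall>x\<in>topspace T. R a `` {x} \<subseteq> a)"
  proof (intro allI impI)
    fix a assume "clopen_upset T le a"
    then have "sem (topspace T) le R (\<lambda>_. a) (Cond (Var p) (Var p)) = topspace T"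
      using valid unfolding valid_esakia_def by (auto dest: spec[of _ "\<lambda>_. a"])
    then show "\<forall>x\<in>topspace T. R a `` {x} \<subseteq> a"
      unfolding sem_Cond_Var_self by blast
  qed
next
  assume "\<forall>a. clopen_upset T le a \<longrightarrow> (\<forall>x\<in>topspace T. R a `` {x} \<subseteq> a)"
  then show "valid_esakia T le R (Cond (Var p) (Var p))"
    unfolding valid_esakia_def sem_Cond_Var_self by blast
qed

lemma valid_frame_Cond_Var_self_iff:
  "valid_frame X le R (Cond (Var p) (Var p)) \<longleftrightarrow>
     (\<forall>a. upset X le a \<longrightarrow> (\<forall>x\<in>X. R a `` {x} \<subseteq> a))"
proof
  assume valid: "valid_frame X le R (Cond (Var p) (Var p))"
  show "\<forall>a. upset X le a \<longrightarrow> (\<forall>x\<in>X. R a `` {x} \<subseteq> a)"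
  proof (intro allI impI)
    fix a assume "upset X le a"
    then have "sem X le R (\<lambda>_. a) (Cond (Var p) (Var p)) = X"
      using valid unfolding valid_frame_def by (auto dest: spec[of _ "\<lambda>_. a"])
    then show "\<forall>x\<in>X. R a `` {x} \<subseteq> a"
      unfolding sem_Cond_Var_self by blast
  qed
next
  assume "\<forall>a. upset X le a \<longrightarrow> (\<forall>x\<in>X. R a `` {x} \<subseteq> a)"
  then show "valid_frame X le R (Cond (Var p) (Var p))"
    unfolding valid_frame_def sem_Cond_Var_self by blast
qed

theorem lemma5p3:
  fixes T :: "'a topology" and le :: "'a rel" and R :: "'a set \<Rightarrow> 'a rel"
  assumes "cond_esakia_space T le R"
    and "valid_esakia T le R (Cond (Var 0) (Var 0))"
  shows "valid_frame (topspace T) le (empty_fill_in T le R) (Cond (Var 0) (Var 0))"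
proof -
  have "\<forall>a. clopen_upset T le a \<longrightarrow> (\<forall>x\<in>topspace T. R a `` {x} \<subseteq> a)"
    using assms(2) by (simp only: valid_esakia_Cond_Var_self_iff)
  then have "\<forall>a. upset (topspace T) le a \<longrightarrow>
      (\<forall>x\<in>topspace T. empty_fill_in T le R a `` {x} \<subseteq> a)"
    by (simp add: empty_fill_in_def)
  then show ?thesis
    by (simp only: valid_frame_Cond_Var_self_iff)
qed

end
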